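(* Let $G$ be a graph of maximum degree at most $3$, and let $S\subseteq V(G)$. If $u$ is a vertex of degree at most $2$ in $G$, then $w_{(G,S)}(u)\leq 2$. Moreover, $w_{(G,S)}(u)=2$ if and only if $u$ is contained in a subgraph $T$ of $G$ that is a tree such that rooting $T$ in $u$ yields a full binary tree and $S\cap V(T)$ is exactly the set of leaves of $T$.
   Context: All graphs are finite, simple and undirected. For a graph $G$, a set $S\subseteq V(G)$, and vertices $u,v$ with $u\in S$ or $v\in S$, ${\rm dist}_{(G,S)}(u,v)$ is the minimum number of edges of a path $P$ in $G$ between $u$ and $v$ such that $S$ contains exactly one endvertex of $P$ and no internal vertex of $P$, and ${\rm dist}_{(G,S)}(u,v)=\infty$ if no such path exists (so ${\rm dist}_{(G,S)}(u,u)=0$ for $u\in S$, and ${\rm dist}_{(G,S)}(u,v)=\infty$ for distinct $u,v\in S$). For $u\in V(G)$, $w_{(G,S)}(u)=\sum_{v\in S}(1/2)^{{\rm dist}_{(G,S)}(u,v)-1}$, where $(1/2)^{\infty}=0$. A rooted tree is a full binary tree if every non-leaf vertex has exactly two children; a leaf of a rooted tree is a vertex with no children. *)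

theory Defs
  imports Complex_Main "HOL-Library.Extended_Nat"
begin

definition graph :: "'a set \<Rightarrow> ('a \<Rightarrow> 'a \<Rightarrow> bool) \<Rightarrow> bool" where
  "graph V E \<longleftrightarrow> finite V \<and> (\<forall>x y. E x y \<longrightarrow> x \<in> V \<and> y \<in> V)
     \<and> (\<forall>x y. E x y \<longrightarrow> E y x) \<and> (\<forall>x. \<not> E x x)"

definition degree :: "'a set \<Rightarrow> ('a \<Rightarrow> 'a \<Rightarrow> bool) \<Rightarrow> 'a \<Rightarrow> nat" where
  "degree V E x = card {y \<in> V. E x y}"

definition is_path :: "'a set \<Rightarrow> ('a \<Rightarrow> 'a \<Rightarrow> bool) \<Rightarrow> 'a list \<Rightarrow> bool" where
  "is_path V E p \<longleftrightarrow> p \<noteq> [] \<and> set p \<subseteq> V \<and> distinct p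
     \<and> (\<forall>i. Suc i < length p \<longrightarrow> E (p ! i) (p ! Suc i))"

definition S_path :: "'a set \<Rightarrow> ('a \<Rightarrow> 'a \<Rightarrow> bool) \<Rightarrow> 'a set \<Rightarrow> 'a \<Rightarrow> 'a \<Rightarrow> 'a list \<Rightarrow> bool" where
  "S_path V E S u v p \<longleftrightarrow> is_path V E p \<and> hd p = u \<and> last p = v
     \<and> card ({hd p, last p} \<inter> S) = 1 \<and> set (butlast (tl p)) \<inter> S = {}"

definition distGS :: "'a set \<Rightarrow> ('a \<Rightarrow> 'a \<Rightarrow> bool) \<Rightarrow> 'a set \<Rightarrow> 'a \<Rightarrow> 'a \<Rightarrow> enat" where
  "distGS V E S u v =
     (if \<exists>p. S_path V E S u v p
      then enat (LEAST n. \<exists>p. S_path V E S u v p \<and> length p = Suc n)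
      else \<infinity>)"

definition wGS :: "'a set \<Rightarrow> ('a \<Rightarrow> 'a \<Rightarrow> bool) \<Rightarrow> 'a set \<Rightarrow> 'a \<Rightarrow> real" where
  "wGS V E S u = (\<Sum>v\<in>S. (case distGS V E S u v of
        enat d \<Rightarrow> (1/2::real) powr (real d - 1) | \<infinity> \<Rightarrow> 0))"

definition subgraph :: "'a set \<Rightarrow> ('a \<Rightarrow> 'a \<Rightarrow> bool) \<Rightarrow> 'a set \<Rightarrow> ('a \<Rightarrow> 'a \<Rightarrow> bool) \<Rightarrow> bool" where
  "subgraph VT ET V E \<longleftrightarrow> VT \<subseteq> V \<and> (\<forall>x y. ET x y \<longrightarrow> E x y \<and> x \<in> VT \<and> y \<in> VT)
     \<and> (\<forall>x y. ET x y \<longrightarrow> ET y x)"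

definition is_tree :: "'a set \<Rightarrow> ('a \<Rightarrow> 'a \<Rightarrow> bool) \<Rightarrow> bool" where
  "is_tree VT ET \<longleftrightarrow> VT \<noteq> {}
     \<and> (\<forall>x\<in>VT. \<forall>y\<in>VT. \<exists>p. is_path VT ET p \<and> hd p = x \<and> last p = y)
     \<and> \<not> (\<exists>c. is_path VT ET c \<and> length c \<ge> 3 \<and> ET (last c) (hd c))"

definition depth :: "'a set \<Rightarrow> ('a \<Rightarrow> 'a \<Rightarrow> bool) \<Rightarrow> 'a \<Rightarrow> 'a \<Rightarrow> nat" where
  "depth VT ET r x = (LEAST n. \<exists>p. is_path VT ET p \<and> hd p = r \<and> last p = x \<and> length p = Suc n)"

definition children :: "'a set \<Rightarrow> ('a \<Rightarrow> 'a \<Rightarrow> bool) \<Rightarrow> 'a \<Rightarrow> 'a \<Rightarrow> 'a set" where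
  "children VT ET r x = {y \<in> VT. ET x y \<and> depth VT ET r y = Suc (depth VT ET r x)}"

definition leaves :: "'a set \<Rightarrow> ('a \<Rightarrow> 'a \<Rightarrow> bool) \<Rightarrow> 'a \<Rightarrow> 'a set" where
  "leaves VT ET r = {x \<in> VT. children VT ET r x = {}}"

definition full_binary :: "'a set \<Rightarrow> ('a \<Rightarrow> 'a \<Rightarrow> bool) \<Rightarrow> 'a \<Rightarrow> bool" where
  "full_binary VT ET r \<longleftrightarrow> (\<forall>x\<in>VT. x \<notin> leaves VT ET r \<longrightarrow> card (children VT ET r x) = 2)"

end

theory Submission
  imports Defs
begin

text \<open>
  If u \<in> S, only v = u contributes, with weight 2, and the one-vertex tree is the witness.
  Otherwise explore G breadth-first from u, stopping at the vertices of S: layer k consists of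
  the vertices reached by a shortest walk of length k from u whose vertices other than the
  last avoid S, so that w(u) = 2 \<Sum>k a_k 2^(-k), where a_k and b_k count the vertices of
  layer k inside and outside S. Each vertex of layer k+1 has a neighbour in layer k outside S,
  and the degree bounds leave every such neighbour at most two neighbours in layer k+1; hence
  a_(k+1) + b_(k+1) \<le> 2 b_k, and the potential \<Sum>j\<le>k a_j 2^(-j) + b_k 2^(-k) never rises
  above its initial value 1. This gives w(u) \<le> 2. If w(u) = 2, every inequality is tight:
  each vertex outside S has exactly two neighbours in the next layer, each of which has exactly
  one neighbour in the previous layer outside S, so these edges form a full binary tree whose
  leaves are the vertices of S reached. Conversely, for a full binary tree the same potential
  never decreases, which is Kraft's inequality \<Sum> 2^(-depth) \<ge> 1 over the leaves, and
  every leaf lies in S at S-distance at most its depth, so w(u) \<ge> 2.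
\<close>

section \<open>Walks\<close>

lemma is_path_iff_successively:
  "is_path V E p \<longleftrightarrow> p \<noteq> [] \<and> set p \<subseteq> V \<and> distinct p \<and> successively E p"
  unfolding is_path_def successively_conv_nth by blast

lemma successively_shorten_to_distinct:
  assumes "p \<noteq> []" "successively R p"
  shows "\<exists>q. q \<noteq> [] \<and> successively R q \<and> distinct q \<and> hd q = hd p \<and> last q = last p
           \<and> set q \<subseteq> set p \<and> length q \<le> length p"
  using assms
proof (induction p)
  case Nil
  then show ?case by simp
next
  case (Cons x r)
  show ?case
  proof (cases "r = []")
    case True
    then show ?thesis by (intro exI[of _ "[x]"]) auto
  next
    case False
    then have "successively R r" and Rx: "R x (hd r)"
      using Cons.prems by (auto simp: successively_Cons)
    then obtain q where q: "q \<noteq> []" "successively R q" "distinct q" "hd q = hd r"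
      "last q = last r" "set q \<subseteq> set r" "length q \<le> length r"
      using Cons.IH False by blast
    show ?thesis
    proof (cases "x \<in> set q")
      case True
      then obtain a b where ab: "q = a @ x # b" by (meson split_list)
      then have "successively R (x # b)" "distinct (x # b)"
        using q(2,3) by (simp_all add: successively_append_iff)
      then show ?thesis using q ab False by (intro exI[of _ "x # b"]) auto
    next
      case False
      then show ?thesis using q Rx \<open>r \<noteq> []\<close> by (intro exI[of _ "x # q"]) (auto simp: successively_Cons)
    qed
  qed
qed

lemma successively_join_at_hd:
  assumes "successively R p" "successively R q" "\<And>x y. R x y \<Longrightarrow> R y x"
    and "p \<noteq> []" "q \<noteq> []" "hd p = hd q"
  shows "successively R (rev p @ tl q) \<and> rev p @ tl q \<noteq> [] \<and> hd (rev p @ tl q) = last p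
     \<and> last (rev p @ tl q) = last q \<and> set (rev p @ tl q) \<subseteq> set p \<union> set q"
proof -
  obtain t where t: "q = hd p # t" using assms(5,6) by (cases q) auto
  have "successively R (rev p)"
    using assms(1,3) by (simp add: successively_mono[of _ p])
  moreover have "t = [] \<or> R (hd p) (hd t) \<and> successively R t"
    using assms(2) t by (metis successively_Cons)
  ultimately have "successively R (rev p @ t)"
    using assms(4) by (auto simp: successively_append_iff last_rev)
  moreover have "last (rev p @ t) = last q"
    using t assms(4) by (cases "t = []") (auto simp: last_rev)
  ultimately show ?thesis using t assms(4) by (auto simp: hd_rev)
qed

lemma last_notin_set_butlast: "distinct xs \<Longrightarrow> last xs \<notin> set (butlast xs)"
  by (cases xs rule: rev_cases) auto

lemma set_subset_hd_last_butlast_tl: "set xs \<subseteq> {hd xs, last xs} \<union> set (butlast (tl xs))"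
proof (cases xs rule: rev_cases)
  case (snoc ys y)
  then show ?thesis by (cases ys) (auto simp: butlast_tl)
qed simp

lemma successively_set_subset:
  assumes "\<And>x y. R x y \<Longrightarrow> y \<in> A" "successively R p" "p \<noteq> []" "hd p \<in> A"
  shows "set p \<subseteq> A"
  using assms(2-4)
proof (induction p)
  case (Cons x r)
  then show ?case using assms(1) by (cases r) (auto simp: successively_Cons)
qed simp

lemma successively_bounded_increase:
  fixes f :: "'b \<Rightarrow> nat"
  assumes "\<And>x y. R x y \<Longrightarrow> f y \<le> Suc (f x)" "successively R p" "p \<noteq> []"
  shows "f (last p) \<le> f (hd p) + (length p - 1)"
  using assms(2,3)
proof (induction p)
  case (Cons x r)
  show ?case
  proof (cases "r = []")
    case False
    then have "f (last r) \<le> f (hd r) + (length r - 1)" "f (hd r) \<le> Suc (f x)"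
      using Cons assms(1) by (auto simp: successively_Cons)
    then show ?thesis using False by (cases r) auto
  qed simp
qed simp

lemma cycle_has_peak:
  fixes f :: "'b \<Rightarrow> nat"
  assumes "\<And>x y. R x y \<Longrightarrow> R y x" "distinct c" "3 \<le> length c" "successively R c" "R (last c) (hd c)"
  shows "\<exists>a b m. a \<noteq> b \<and> R a m \<and> R b m \<and> f a \<le> f m \<and> f b \<le> f m"
proof -
  define n where "n = length c"
  have "c \<noteq> []" using assms(3) by auto
  then have "Max (f ` set c) \<in> f ` set c" by (intro Max_in) auto
  then obtain i where i: "i < n" "f (c ! i) = Max (f ` set c)"
    unfolding n_def by (metis imageE in_set_conv_nth)
  have peak: "f (c ! j) \<le> f (c ! i)" if "j < n" for j
    unfolding i(2) n_def using that n_def by (intro Max_ge) auto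
  define pv where "pv = (if i = 0 then n - 1 else i - 1)"
  define nx where "nx = (if i = n - 1 then 0 else i + 1)"
  have ends: "last c = c ! (n - 1)" "hd c = c ! 0"
    unfolding n_def using \<open>c \<noteq> []\<close> by (simp_all add: last_conv_nth hd_conv_nth)
  have "R (c ! pv) (c ! i)"
    using assms(5) successively_nth[OF assms(4), of "i - 1"] i ends unfolding pv_def n_def by auto
  moreover have "R (c ! nx) (c ! i)"
    using assms(1,5) successively_nth[OF assms(4), of i] i ends unfolding nx_def n_def by auto
  moreover have "pv < n" "nx < n" "pv \<noteq> nx"
    using i assms(3) unfolding pv_def nx_def n_def by auto
  then have "c ! pv \<noteq> c ! nx"
    using assms(2) unfolding n_def by (simp add: nth_eq_iff_index_eq)
  ultimately show ?thesis using peak \<open>pv < n\<close> \<open>nx < n\<close> by blast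
qed

section \<open>A potential on level counts\<close>

lemma sum_by_value:
  fixes h :: "'b \<Rightarrow> nat" and f :: "nat \<Rightarrow> 'c::comm_semiring_1"
  assumes "finite Z" "\<And>z. z \<in> Z \<Longrightarrow> h z \<le> K"
  shows "(\<Sum>z\<in>Z. f (h z)) = (\<Sum>j\<le>K. of_nat (card {z\<in>Z. h z = j}) * f j)"
proof -
  have "(\<Sum>z\<in>Z. f (h z)) = (\<Sum>j\<le>K. \<Sum>z\<in>{z\<in>Z. h z = j}. f (h z))"
    by (rule sum.group[symmetric]) (use assms in auto)
  also have "\<dots> = (\<Sum>j\<le>K. of_nat (card {z\<in>Z. h z = j}) * f j)"
    by (rule sum.cong) auto
  finally show ?thesis .
qed

definition level_potential :: "(nat \<Rightarrow> nat) \<Rightarrow> (nat \<Rightarrow> nat) \<Rightarrow> nat \<Rightarrow> real" where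
  "level_potential a b k = (\<Sum>j\<le>k. real (a j) * (1/2)^j) + real (b k) * (1/2)^k"

lemma level_potential_Suc:
  "level_potential a b (Suc k) =
     level_potential a b k + (real (a (Suc k) + b (Suc k)) - 2 * real (b k)) * (1/2)^(Suc k)"
  unfolding level_potential_def by (simp add: algebra_simps)

lemma level_potential_antimono:
  assumes "\<And>k. k < K \<Longrightarrow> a (Suc k) + b (Suc k) \<le> 2 * b k" "j \<le> k" "k \<le> K"
  shows "level_potential a b k \<le> level_potential a b j"
  using assms(2,3)
proof (induction k rule: dec_induct)
  case (step n)
  have "real (a (Suc n) + b (Suc n)) \<le> 2 * real (b n)"
    using assms(1)[of n] step.prems by linarith
  then have "(real (a (Suc n) + b (Suc n)) - 2 * real (b n)) * (1/2)^(Suc n) \<le> 0"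
    by (simp add: mult_nonpos_nonneg)
  then show ?case using step level_potential_Suc[of a b n] by simp
qed simp

lemma level_potential_mono:
  assumes "\<And>k. k < K \<Longrightarrow> 2 * b k \<le> a (Suc k) + b (Suc k)" "j \<le> k" "k \<le> K"
  shows "level_potential a b j \<le> level_potential a b k"
  using assms(2,3)
proof (induction k rule: dec_induct)
  case (step n)
  have "2 * real (b n) \<le> real (a (Suc n) + b (Suc n))"
    using assms(1)[of n] step.prems by linarith
  then have "0 \<le> (real (a (Suc n) + b (Suc n)) - 2 * real (b n)) * (1/2)^(Suc n)"
    by simp
  then show ?case using step level_potential_Suc[of a b n] by simp
qed simp

lemma level_potential_const_imp_tight:
  assumes le: "\<And>k. k < K \<Longrightarrow> a (Suc k) + b (Suc k) \<le> 2 * b k"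
    and const: "level_potential a b K = level_potential a b 0" and "k < K"
  shows "a (Suc k) + b (Suc k) = 2 * b k"
proof -
  have "level_potential a b (Suc k) = level_potential a b k"
  proof -
    have "level_potential a b K \<le> level_potential a b (Suc k)"
      "level_potential a b (Suc k) \<le> level_potential a b k"
      "level_potential a b k \<le> level_potential a b 0"
      using \<open>k < K\<close> by (auto intro: level_potential_antimono[where K=K and a=a and b=b, OF le])
    then show ?thesis using const by linarith
  qed
  then have "real (a (Suc k) + b (Suc k)) = 2 * real (b k)"
    using level_potential_Suc[of a b k] by simp
  then show ?thesis by linarith
qed

section \<open>Rooted trees\<close>

lemma graph_if_subgraph: "graph V E \<Longrightarrow> subgraph VT ET V E \<Longrightarrow> graph VT ET"
  unfolding graph_def subgraph_def by (meson finite_subset)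

locale rooted_tree =
  fixes TV :: "'a set" and TE :: "'a \<Rightarrow> 'a \<Rightarrow> bool" and r :: 'a
  assumes graph: "graph TV TE" and tree: "is_tree TV TE" and root_in_TV: "r \<in> TV"
begin

lemma finite_TV: "finite TV" and TE_sym: "TE x y \<Longrightarrow> TE y x" and TE_in_TV: "TE x y \<Longrightarrow> y \<in> TV"
  using graph unfolding graph_def by auto

abbreviation dep :: "'a \<Rightarrow> nat" where
  "dep \<equiv> depth TV TE r"

lemma depth_witness:
  assumes "x \<in> TV"
  shows "\<exists>p. is_path TV TE p \<and> hd p = r \<and> last p = x \<and> length p = Suc (dep x)"
proof -
  obtain p where "is_path TV TE p" "hd p = r" "last p = x"
    using tree assms root_in_TV unfolding is_tree_def by blast
  then have "\<exists>n p. is_path TV TE p \<and> hd p = r \<and> last p = x \<and> length p = Suc n"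
    unfolding is_path_iff_successively by (metis Suc_diff_1 length_greater_0_conv)
  then show ?thesis unfolding depth_def by (rule LeastI_ex)
qed

lemma depth_le_walk:
  assumes "p \<noteq> []" "successively TE p" "hd p = r"
  shows "dep (last p) \<le> length p - 1"
proof -
  obtain q where q: "q \<noteq> []" "successively TE q" "distinct q" "hd q = r" "last q = last p"
     "set q \<subseteq> set p" "length q \<le> length p"
    using successively_shorten_to_distinct[OF assms(1,2)] assms(3) by auto
  have "set p \<subseteq> TV"
    using successively_set_subset[OF TE_in_TV assms(2,1)] assms(3) root_in_TV by simp
  then have "is_path TV TE q" using q unfolding is_path_iff_successively by auto
  then have "dep (last p) \<le> length q - 1" unfolding depth_def using q
    by (intro Least_le) (metis Suc_diff_1 length_greater_0_conv)
  then show ?thesis using q(7) by linarith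
qed

lemma depth_edge: "TE x y \<Longrightarrow> dep y \<le> Suc (dep x)"
proof -
  assume e: "TE x y"
  then obtain p where p: "is_path TV TE p" "hd p = r" "last p = x" "length p = Suc (dep x)"
    using depth_witness TE_in_TV TE_sym by blast
  then have "successively TE (p @ [y])"
    using e unfolding is_path_iff_successively by (simp add: successively_append_iff)
  then show ?thesis using depth_le_walk[of "p @ [y]"] p unfolding is_path_iff_successively by auto
qed

lemma depth_along_shortest_path:
  assumes p: "is_path TV TE p" "hd p = r" "length p = Suc (dep (last p))" and j: "j < length p"
  shows "dep (p ! j) = j"
proof -
  have ne: "p \<noteq> []" and sp: "successively TE p" using p unfolding is_path_iff_successively by auto
  have "successively TE (take (Suc j) p)" "successively TE (drop j p)"
    using sp append_take_drop_id[of "Suc j" p] append_take_drop_id[of j p]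
    by (metis successively_append_iff)+
  moreover have "last (take (Suc j) p) = p ! j" "hd (drop j p) = p ! j"
    using j by (simp_all add: take_Suc_conv_app_nth hd_drop_conv_nth)
  ultimately have "dep (p ! j) \<le> j" "dep (last p) \<le> dep (p ! j) + (length p - j - 1)"
    using depth_le_walk[of "take (Suc j) p"] successively_bounded_increase[where f=dep and p="drop j p", OF depth_edge]
      p(2) ne j by (auto simp: hd_conv_nth)
  then show ?thesis using p(3) j by linarith
qed

lemma depth_root: "dep r = 0"
  unfolding depth_def
  by (rule Least_equality) (use root_in_TV in \<open>auto intro!: exI[of _ "[r]"] simp: is_path_iff_successively\<close>)

lemma depth_eq_0_imp_root: "x \<in> TV \<Longrightarrow> dep x = 0 \<Longrightarrow> x = r"
  using depth_witness[of x] unfolding is_path_iff_successively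
  by (metis One_nat_def Suc_length_conv last_ConsL list.sel(1) length_0_conv)

lemma depth_less_card: "x \<in> TV \<Longrightarrow> dep x < card TV"
proof -
  assume "x \<in> TV"
  then obtain p where p: "is_path TV TE p" "length p = Suc (dep x)" using depth_witness by blast
  have "length p = card (set p)" using p(1) unfolding is_path_iff_successively by (simp add: distinct_card)
  also have "\<dots> \<le> card TV" using p(1) finite_TV unfolding is_path_iff_successively by (simp add: card_mono)
  finally show ?thesis using p(2) by simp
qed

lemma parent_unique:
  assumes "y \<in> children TV TE r x1" "y \<in> children TV TE r x2"
  shows "x1 = x2"
proof (rule ccontr)
  assume "x1 \<noteq> x2"
  have y: "TE x1 y" "TE x2 y" "dep y = Suc (dep x1)" "dep y = Suc (dep x2)" "y \<in> TV"
    using assms unfolding children_def by auto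
  obtain p1 where p1: "is_path TV TE p1" "hd p1 = r" "last p1 = x1" "length p1 = Suc (dep x1)"
    using depth_witness TE_in_TV TE_sym y(1) by blast
  obtain p2 where p2: "is_path TV TE p2" "hd p2 = r" "last p2 = x2" "length p2 = Suc (dep x2)"
    using depth_witness TE_in_TV TE_sym y(2) by blast
  have "y \<notin> set p1" "y \<notin> set p2"
    using depth_along_shortest_path[OF p1(1,2)] depth_along_shortest_path[OF p2(1,2)] p1 p2 y
    by (metis in_set_conv_nth less_irrefl_nat)+
  let ?w = "rev p1 @ tl p2"
  have w: "successively TE ?w" "?w \<noteq> []" "hd ?w = x1" "last ?w = x2" "set ?w \<subseteq> set p1 \<union> set p2"
    using successively_join_at_hd[of TE p1 p2] p1 p2 TE_sym unfolding is_path_iff_successively by auto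
  obtain q where q: "q \<noteq> []" "successively TE q" "distinct q" "hd q = x1" "last q = x2" "set q \<subseteq> set ?w"
    using successively_shorten_to_distinct[OF w(2,1)] w by auto
  have "y \<notin> set q" using q(6) w(5) \<open>y \<notin> set p1\<close> \<open>y \<notin> set p2\<close> by blast
  have "2 \<le> length q"
    using q \<open>x1 \<noteq> x2\<close> by (cases q) (auto simp: Suc_le_eq)
  have "set q \<subseteq> TV" using q(6) w(5) p1(1) p2(1) unfolding is_path_iff_successively by auto
  then have "is_path TV TE (q @ [y])"
    using q \<open>y \<notin> set q\<close> y(1,2,5) unfolding is_path_iff_successively by (auto simp: successively_append_iff)
  moreover have "3 \<le> length (q @ [y])" using \<open>2 \<le> length q\<close> by simp
  moreover have "TE (last (q @ [y])) (hd (q @ [y]))" using q y(1) TE_sym by simp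
  ultimately show False using tree unfolding is_tree_def by blast
qed

lemma kraft_full_binary:
  assumes "full_binary TV TE r"
  shows "1 \<le> (\<Sum>x\<in>leaves TV TE r. (1/2::real) ^ dep x)"
proof -
  define level where "level k = {x \<in> TV. dep x = k}" for k
  define a where "a k = card (level k \<inter> leaves TV TE r)" for k
  define b where "b k = card (level k - leaves TV TE r)" for k
  have finite_level: "finite (level k)" for k unfolding level_def using finite_TV by auto
  have grow: "2 * b k \<le> a (Suc k) + b (Suc k)" for k
  proof -
    have children_level: "children TV TE r x \<subseteq> level (Suc k)" if "x \<in> level k" for x
      using that unfolding children_def level_def by auto
    have "2 * b k = (\<Sum>x\<in>level k - leaves TV TE r. card (children TV TE r x))"
      using assms unfolding b_def level_def full_binary_def by simp
    also have "\<dots> = card (\<Union>x\<in>level k - leaves TV TE r. children TV TE r x)"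
      using finite_level children_level parent_unique
      by (intro card_UN_disjoint[symmetric]) (auto intro: finite_subset)
    also have "\<dots> \<le> card (level (Suc k))"
      using finite_level children_level by (intro card_mono) auto
    also have "\<dots> = a (Suc k) + b (Suc k)"
      unfolding a_def b_def using finite_level by (metis card_Int_Diff inf_commute)
    finally show ?thesis .
  qed
  have "level 0 = {r}" unfolding level_def using depth_eq_0_imp_root depth_root root_in_TV by auto
  then have "1 = level_potential a b 0"
    unfolding level_potential_def a_def b_def by (cases "r \<in> leaves TV TE r") (auto simp: insert_Diff_if)
  also have "\<dots> \<le> level_potential a b (card TV)"
    by (rule level_potential_mono) (use grow in auto)
  also have "\<dots> = (\<Sum>j\<le>card TV. real (a j) * (1/2)^j)"
  proof -
    have "level (card TV) = {}" unfolding level_def using depth_less_card by fastforce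
    then show ?thesis unfolding level_potential_def b_def by simp
  qed
  also have "\<dots> = (\<Sum>x\<in>leaves TV TE r. (1/2::real) ^ dep x)"
  proof -
    have "finite (leaves TV TE r)"
      using finite_TV unfolding leaves_def by simp
    then have "(\<Sum>x\<in>leaves TV TE r. (1/2::real) ^ dep x)
        = (\<Sum>j\<le>card TV. real (card {x \<in> leaves TV TE r. dep x = j}) * (1/2)^j)"
      by (rule sum_by_value) (auto simp: leaves_def less_imp_le_nat depth_less_card)
    moreover have "{x \<in> leaves TV TE r. dep x = j} = level j \<inter> leaves TV TE r" for j
      unfolding level_def leaves_def by auto
    ultimately show ?thesis unfolding a_def by simp
  qed
  finally show ?thesis .
qed

end

section \<open>Walks from u avoiding S\<close>

locale avoiding_walks =
  fixes V :: "'a set" and E :: "'a \<Rightarrow> 'a \<Rightarrow> bool" and S :: "'a set" and u :: 'a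
  assumes graph: "graph V E" and S_subset: "S \<subseteq> V" and root_in_V: "u \<in> V" and root_notin_S: "u \<notin> S"
begin

lemma finite_V: "finite V" and E_sym: "E x y \<Longrightarrow> E y x" and E_in_V: "E x y \<Longrightarrow> x \<in> V \<and> y \<in> V"
  using graph unfolding graph_def by auto

lemma finite_S: "finite S"
  using S_subset finite_V finite_subset by blast

text \<open>Walks instead of the paths of distGS, and endpoints outside S allowed: the layers
  need those endpoints, and for endpoints in S the two notions give the same distance.\<close>

definition avoiding_walk :: "'a list \<Rightarrow> 'a \<Rightarrow> bool" where
  "avoiding_walk p x \<longleftrightarrow> p \<noteq> [] \<and> hd p = u \<and> last p = x \<and> successively E p \<and> set p \<subseteq> V
     \<and> (\<forall>y\<in>set p. y \<in> S \<longrightarrow> y = x)"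

definition reachable :: "'a \<Rightarrow> bool" where
  "reachable x \<longleftrightarrow> (\<exists>p. avoiding_walk p x)"

definition lev :: "'a \<Rightarrow> nat" where
  "lev x = (LEAST n. \<exists>p. avoiding_walk p x \<and> length p = Suc n)"

definition layer :: "nat \<Rightarrow> 'a set" where
  "layer k = {x. reachable x \<and> lev x = k}"

lemma avoiding_walk_shorten:
  assumes "avoiding_walk p x"
  shows "\<exists>q. avoiding_walk q x \<and> distinct q \<and> length q \<le> length p"
proof -
  obtain q where "q \<noteq> []" "successively E q" "distinct q" "hd q = hd p"
     "last q = last p" "set q \<subseteq> set p" "length q \<le> length p"
    using successively_shorten_to_distinct[of p E] assms unfolding avoiding_walk_def by blast
  then show ?thesis using assms unfolding avoiding_walk_def by blast
qed

lemma lev_le: "avoiding_walk p x \<Longrightarrow> lev x \<le> length p - 1"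
  unfolding lev_def by (rule Least_le) (metis Suc_diff_1 avoiding_walk_def length_greater_0_conv)

lemma lev_witness:
  assumes "reachable x"
  shows "\<exists>p. avoiding_walk p x \<and> distinct p \<and> length p = Suc (lev x)"
proof -
  have "\<exists>n p. avoiding_walk p x \<and> length p = Suc n"
    using assms unfolding reachable_def avoiding_walk_def by (metis Suc_diff_1 length_greater_0_conv)
  then have "\<exists>p. avoiding_walk p x \<and> length p = Suc (lev x)"
    unfolding lev_def by (rule LeastI_ex)
  then obtain p where p: "avoiding_walk p x" "length p = Suc (lev x)" by blast
  obtain q where q: "avoiding_walk q x" "distinct q" "length q \<le> length p"
    using avoiding_walk_shorten[OF p(1)] by blast
  have "lev x \<le> length q - 1" by (rule lev_le[OF q(1)])
  then have "length q = Suc (lev x)"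
    using q(1,3) p(2) unfolding avoiding_walk_def by (cases q) auto
  then show ?thesis using q by blast
qed

lemma reachable_in_V: "reachable x \<Longrightarrow> x \<in> V"
  unfolding reachable_def avoiding_walk_def by (metis last_in_set subsetD)

lemma reachable_root: "reachable u" and lev_root: "lev u = 0"
proof -
  have "avoiding_walk [u] u" using root_in_V unfolding avoiding_walk_def by auto
  then show "reachable u" "lev u = 0" unfolding reachable_def using lev_le by fastforce+
qed

lemma lev_eq_0_imp_root: "reachable x \<Longrightarrow> lev x = 0 \<Longrightarrow> x = u"
  using lev_witness[of x] unfolding avoiding_walk_def
  by (metis One_nat_def Suc_length_conv last_ConsL list.sel(1) length_0_conv)

lemma lev_less_card: "reachable x \<Longrightarrow> lev x < card V"
proof -
  assume "reachable x"
  then obtain p where p: "avoiding_walk p x" "distinct p" "length p = Suc (lev x)"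
    using lev_witness by blast
  have "length p = card (set p)" using p(2) by (simp add: distinct_card)
  also have "\<dots> \<le> card V" using p(1) finite_V unfolding avoiding_walk_def by (simp add: card_mono)
  finally show ?thesis using p(3) by simp
qed

lemma reachable_step:
  assumes "reachable x" "x \<notin> S" "E x y"
  shows "reachable y \<and> lev y \<le> Suc (lev x)"
proof -
  obtain p where p: "avoiding_walk p x" "length p = Suc (lev x)"
    using lev_witness[OF assms(1)] by blast
  have "avoiding_walk (p @ [y]) y"
    using p(1) assms(2,3) E_in_V[OF assms(3)] unfolding avoiding_walk_def
    by (auto simp: successively_append_iff)
  then show ?thesis using lev_le[of "p @ [y]" y] p(2) unfolding reachable_def by auto
qed

lemma parent_exists:
  assumes "reachable y" "lev y = Suc k"
  shows "\<exists>x. reachable x \<and> lev x = k \<and> x \<notin> S \<and> E x y"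
proof -
  obtain p where p: "avoiding_walk p y" "distinct p" "length p = Suc (Suc k)"
    using lev_witness[OF assms(1)] assms(2) by metis
  define q where "q = butlast p"
  have pq: "p = q @ [y]"
    using p(1) unfolding q_def avoiding_walk_def by (metis append_butlast_last_id)
  have "q \<noteq> []"
    using p(3) unfolding q_def by (cases p rule: rev_cases) auto
  have q: "avoiding_walk q (last q)" "last q \<notin> S" "E (last q) y"
    using p(1,2) \<open>q \<noteq> []\<close> unfolding pq avoiding_walk_def by (auto simp: successively_append_iff)
  then have "lev (last q) \<le> k" using lev_le[OF q(1)] pq p(3) by simp
  moreover have "lev y \<le> Suc (lev (last q))"
    using reachable_step[of "last q" y] q unfolding reachable_def by blast
  ultimately show ?thesis using assms(2) q unfolding reachable_def by (intro exI[of _ "last q"]) auto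
qed

lemma S_path_iff_avoiding_walk:
  assumes "v \<in> S"
  shows "S_path V E S u v p \<longleftrightarrow> avoiding_walk p v \<and> distinct p"
proof
  assume "S_path V E S u v p"
  then show "avoiding_walk p v \<and> distinct p"
    using set_subset_hd_last_butlast_tl[of p] root_notin_S
    unfolding S_path_def is_path_iff_successively avoiding_walk_def by blast
next
  assume p: "avoiding_walk p v \<and> distinct p"
  have "set (butlast (tl p)) \<subseteq> set (butlast p)"
    unfolding butlast_tl by (cases "butlast p") auto
  then have "set (butlast (tl p)) \<inter> S = {}"
    using p last_notin_set_butlast[of p] unfolding avoiding_walk_def by (blast dest: in_set_butlastD)
  moreover have "card ({u, v} \<inter> S) = 1"
    using assms root_notin_S by (simp add: Int_insert_left)
  ultimately show "S_path V E S u v p"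
    using p unfolding S_path_def is_path_iff_successively avoiding_walk_def by auto
qed

lemma distGS_eq:
  assumes "v \<in> S"
  shows "distGS V E S u v = (if reachable v then enat (lev v) else \<infinity>)"
proof (cases "reachable v")
  case True
  have "(LEAST n. \<exists>p. S_path V E S u v p \<and> length p = Suc n) = lev v"
  proof (rule Least_equality)
    show "\<exists>p. S_path V E S u v p \<and> length p = Suc (lev v)"
      using lev_witness[OF True] S_path_iff_avoiding_walk[OF assms] by blast
  next
    fix n assume "\<exists>p. S_path V E S u v p \<and> length p = Suc n"
    then show "lev v \<le> n" using S_path_iff_avoiding_walk[OF assms] lev_le by fastforce
  qed
  then show ?thesis unfolding distGS_def using True lev_witness S_path_iff_avoiding_walk[OF assms] by auto
next
  case False
  then show ?thesis
    unfolding distGS_def reachable_def using S_path_iff_avoiding_walk[OF assms] by auto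
qed

lemma wGS_eq_sum_reachable: "wGS V E S u = (\<Sum>v\<in>{v\<in>S. reachable v}. 2 * (1/2::real)^(lev v))"
proof -
  have "(1/2::real) powr (real d - 1) = 2 * (1/2)^d" for d :: nat
    by (simp add: powr_diff powr_realpow)
  then have "wGS V E S u = (\<Sum>v\<in>S. if reachable v then 2 * (1/2::real)^(lev v) else 0)"
    unfolding wGS_def by (intro sum.cong) (auto simp: distGS_eq)
  also have "\<dots> = (\<Sum>v\<in>{v\<in>S. reachable v}. 2 * (1/2::real)^(lev v))"
    by (rule sum.inter_filter[symmetric]) (rule finite_S)
  finally show ?thesis .
qed

definition layer_hits :: "nat \<Rightarrow> nat" where
  "layer_hits k = card (layer k \<inter> S)"

definition layer_open :: "nat \<Rightarrow> nat" where
  "layer_open k = card (layer k - S)"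

lemma finite_layer: "finite (layer k)"
  by (rule finite_subset[OF _ finite_V]) (auto simp: layer_def reachable_in_V)

lemma layer_empty: "card V \<le> k \<Longrightarrow> layer k = {}"
  unfolding layer_def using lev_less_card by fastforce

lemma layer_0: "layer 0 = {u}"
  unfolding layer_def using lev_eq_0_imp_root reachable_root lev_root by auto

lemma card_layer: "card (layer k) = layer_hits k + layer_open k"
  unfolding layer_hits_def layer_open_def using finite_layer by (metis card_Int_Diff inf_commute)

lemma level_potential_0: "level_potential layer_hits layer_open 0 = 1"
  using root_notin_S unfolding level_potential_def layer_hits_def layer_open_def
  by (simp add: layer_0 insert_Diff_if)

lemma wGS_eq_sum_layers: "wGS V E S u = 2 * (\<Sum>j\<le>card V. real (layer_hits j) * (1/2)^j)"
proof -
  have "(\<Sum>v\<in>{v\<in>S. reachable v}. (1/2::real)^(lev v))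
      = (\<Sum>j\<le>card V. real (card {v\<in>{v\<in>S. reachable v}. lev v = j}) * (1/2)^j)"
    by (rule sum_by_value) (use finite_S lev_less_card less_imp_le in auto)
  also have "\<dots> = (\<Sum>j\<le>card V. real (layer_hits j) * (1/2)^j)"
  proof -
    have "{v\<in>{v\<in>S. reachable v}. lev v = j} = layer j \<inter> S" for j
      unfolding layer_def by auto
    then show ?thesis unfolding layer_hits_def by simp
  qed
  finally show ?thesis
    unfolding wGS_eq_sum_reachable by (simp add: sum_distrib_left[symmetric])
qed

lemma leaf_reachable_within_depth:
  assumes sub: "subgraph TV TE V E" and "is_tree TV TE" "u \<in> TV"
    and leaves: "S \<inter> TV = leaves TV TE u" and x: "x \<in> S \<inter> TV"
  shows "reachable x \<and> lev x \<le> depth TV TE u x"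
proof -
  interpret T: rooted_tree TV TE u
    using graph_if_subgraph[OF graph sub] assms(2,3) by unfold_locales
  obtain p where p: "is_path TV TE p" "hd p = u" "last p = x" "length p = Suc (T.dep x)"
    using T.depth_witness x by blast
  have sp: "successively TE p" and "p \<noteq> []" using p(1) unfolding is_path_iff_successively by auto
  have inner: "p ! i \<notin> S" if i: "Suc i < length p" for i
  proof
    assume "p ! i \<in> S"
    have e: "TE (p ! i) (p ! Suc i)" by (rule successively_nth[OF sp i])
    have "T.dep (p ! i) = i" "T.dep (p ! Suc i) = Suc i"
      using T.depth_along_shortest_path[OF p(1,2)] p(3,4) i by auto
    then have "p ! Suc i \<in> children TV TE u (p ! i)"
      using e T.TE_in_TV unfolding children_def by auto
    moreover have "p ! i \<in> leaves TV TE u"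
      using \<open>p ! i \<in> S\<close> T.TE_in_TV[OF T.TE_sym[OF e]] leaves by blast
    ultimately show False unfolding leaves_def by blast
  qed
  have "\<forall>y\<in>set p. y \<in> S \<longrightarrow> y = x"
  proof (intro ballI impI)
    fix y assume "y \<in> set p" "y \<in> S"
    then obtain i where "i < length p" "p ! i = y" by (metis in_set_conv_nth)
    then show "y = x"
      using inner p(3) \<open>p \<noteq> []\<close> \<open>y \<in> S\<close> by (metis Suc_lessI diff_Suc_1 last_conv_nth)
  qed
  moreover have "successively E p"
    using sp sub unfolding subgraph_def by (blast intro: successively_mono)
  moreover have "set p \<subseteq> V"
    using p(1) sub unfolding is_path_iff_successively subgraph_def by blast
  ultimately have "avoiding_walk p x"
    using p(2,3) \<open>p \<noteq> []\<close> unfolding avoiding_walk_def by blast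
  then show ?thesis using lev_le[of p x] p(4) unfolding reachable_def by auto
qed

lemma wGS_ge_2_if_full_binary_tree:
  assumes sub: "subgraph TV TE V E" and tree: "is_tree TV TE" "u \<in> TV"
    and full: "full_binary TV TE u" and leaves: "S \<inter> TV = leaves TV TE u"
  shows "2 \<le> wGS V E S u"
proof -
  interpret T: rooted_tree TV TE u
    using graph_if_subgraph[OF graph sub] tree by unfold_locales
  have "2 \<le> 2 * (\<Sum>x\<in>S \<inter> TV. (1/2::real) ^ T.dep x)"
    using T.kraft_full_binary[OF full] leaves by simp
  also have "\<dots> \<le> (\<Sum>x\<in>S \<inter> TV. 2 * (1/2::real) ^ lev x)"
    unfolding sum_distrib_left
    by (rule sum_mono) (use leaf_reachable_within_depth[OF sub tree leaves] in \<open>auto intro: power_decreasing\<close>)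
  also have "\<dots> \<le> (\<Sum>v\<in>{v\<in>S. reachable v}. 2 * (1/2::real) ^ lev v)"
    by (rule sum_mono2) (use finite_S leaf_reachable_within_depth[OF sub tree leaves] in auto)
  finally show ?thesis unfolding wGS_eq_sum_reachable .
qed

end

section \<open>The upper bound and the equality case\<close>

locale subcubic_avoiding_walks = avoiding_walks +
  assumes degree_le_3: "\<And>x. x \<in> V \<Longrightarrow> degree V E x \<le> 3" and root_degree_le_2: "degree V E u \<le> 2"
begin

lemma card_successors_le_2:
  assumes "x \<in> layer k - S"
  shows "card {y \<in> layer (Suc k). E x y} \<le> 2"
proof (cases k)
  case 0
  then have "x = u" using assms layer_0 by auto
  have "card {y \<in> layer (Suc k). E x y} \<le> degree V E x"
    unfolding degree_def by (rule card_mono) (use finite_V E_in_V in auto)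
  then show ?thesis using root_degree_le_2 \<open>x = u\<close> by simp
next
  case (Suc m)
  then have x: "reachable x" "lev x = Suc m" "x \<in> V"
    using assms reachable_in_V unfolding layer_def by auto
  obtain z where z: "lev z = m" "E z x" using parent_exists[OF x(1,2)] by blast
  have "{y \<in> layer (Suc k). E x y} \<subseteq> {y\<in>V. E x y} - {z}"
    using z x Suc E_in_V unfolding layer_def by auto
  then have "card {y \<in> layer (Suc k). E x y} \<le> card ({y\<in>V. E x y} - {z})"
    by (rule card_mono[rotated]) (use finite_V in auto)
  also have "\<dots> = degree V E x - 1"
    unfolding degree_def using z E_in_V E_sym by (simp add: card_Diff_singleton_if)
  also have "\<dots> \<le> 2" using degree_le_3[OF x(3)] by simp
  finally show ?thesis .
qed

lemma layer_Suc_subset: "layer (Suc k) \<subseteq> (\<Union>x\<in>layer k - S. {y \<in> layer (Suc k). E x y})"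
proof
  fix y assume "y \<in> layer (Suc k)"
  then obtain x where "reachable x" "lev x = k" "x \<notin> S" "E x y"
    using parent_exists unfolding layer_def by blast
  then show "y \<in> (\<Union>x\<in>layer k - S. {y \<in> layer (Suc k). E x y})"
    using \<open>y \<in> layer (Suc k)\<close> unfolding layer_def by auto
qed

lemma card_layer_Suc_le: "card (layer (Suc k)) \<le> 2 * card (layer k - S)"
proof -
  have "card (layer (Suc k)) \<le> card (\<Union>x\<in>layer k - S. {y \<in> layer (Suc k). E x y})"
    by (rule card_mono[OF _ layer_Suc_subset]) (use finite_layer in auto)
  also have "\<dots> \<le> (\<Sum>x\<in>layer k - S. card {y \<in> layer (Suc k). E x y})"
    by (rule card_UN_le) (use finite_layer in auto)
  also have "\<dots> \<le> (\<Sum>x\<in>layer k - S. 2)"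
    by (rule sum_mono) (rule card_successors_le_2)
  finally show ?thesis by simp
qed

lemma layer_counts_Suc_le: "layer_hits (Suc k) + layer_open (Suc k) \<le> 2 * layer_open k"
  using card_layer_Suc_le card_layer unfolding layer_open_def by metis

lemma wGS_le_2: "wGS V E S u \<le> 2"
proof -
  have "(\<Sum>j\<le>card V. real (layer_hits j) * (1/2)^j) \<le> level_potential layer_hits layer_open (card V)"
    unfolding level_potential_def by simp
  also have "\<dots> \<le> level_potential layer_hits layer_open 0"
    by (rule level_potential_antimono) (use layer_counts_Suc_le in auto)
  finally show ?thesis using level_potential_0 wGS_eq_sum_layers by simp
qed

lemma card_layer_Suc_if_wGS_eq_2:
  assumes "wGS V E S u = 2"
  shows "card (layer (Suc k)) = 2 * card (layer k - S)"
proof (cases "k < card V")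
  case True
  have "layer_open (card V) = 0" unfolding layer_open_def using layer_empty by simp
  then have "level_potential layer_hits layer_open (card V) = level_potential layer_hits layer_open 0"
    using assms wGS_eq_sum_layers level_potential_0 unfolding level_potential_def by simp
  then have "layer_hits (Suc k) + layer_open (Suc k) = 2 * layer_open k"
    using level_potential_const_imp_tight layer_counts_Suc_le True by blast
  then show ?thesis using card_layer unfolding layer_open_def by metis
next
  case False
  then show ?thesis using layer_empty[of k] layer_empty[of "Suc k"] by simp
qed

end

locale tight_avoiding_walks = subcubic_avoiding_walks +
  assumes card_layer_Suc: "\<And>k. card (layer (Suc k)) = 2 * card (layer k - S)"
begin

lemma layer_edge_counts:
  shows "x \<in> layer k - S \<Longrightarrow> card {y \<in> layer (Suc k). E x y} = 2"
    and "y \<in> layer (Suc k) \<Longrightarrow> card {x \<in> layer k - S. E x y} = 1"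
proof -
  let ?A = "layer k - S" and ?B = "layer (Suc k)"
  have fin: "finite ?A" "finite ?B" using finite_layer by auto
  have pred_pos: "1 \<le> card {x \<in> ?A. E x y}" if y: "y \<in> ?B" for y
  proof -
    obtain x where "reachable x" "lev x = k" "x \<notin> S" "E x y"
      using y parent_exists unfolding layer_def by blast
    then have "{x \<in> ?A. E x y} \<noteq> {}" unfolding layer_def by auto
    moreover have "finite {x \<in> ?A. E x y}" using fin(1) by (rule finite_subset[rotated]) auto
    ultimately show ?thesis by (metis One_nat_def Suc_leI card_gt_0_iff)
  qed
  have out_le: "(\<Sum>x\<in>?A. card {y \<in> ?B. E x y}) \<le> (\<Sum>x\<in>?A. 2)"
    by (rule sum_mono) (rule card_successors_le_2)
  have in_ge: "(\<Sum>y\<in>?B. 1) \<le> (\<Sum>y\<in>?B. card {x \<in> ?A. E x y})"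
    by (rule sum_mono) (rule pred_pos)
  have "(\<Sum>x\<in>?A. 2) = (\<Sum>y\<in>?B. 1::nat)"
    using card_layer_Suc[of k] by simp
  moreover have "(\<Sum>y\<in>?B. card {x \<in> ?A. E x y}) = (\<Sum>x\<in>?A. card {y \<in> ?B. E x y})"
    by (rule sum_multicount_gen[symmetric]) (use fin in auto)
  ultimately have out_eq: "(\<Sum>x\<in>?A. card {y \<in> ?B. E x y}) = (\<Sum>x\<in>?A. 2)"
    and in_eq: "(\<Sum>y\<in>?B. 1) = (\<Sum>y\<in>?B. card {x \<in> ?A. E x y})"
    using out_le in_ge by linarith+
  show "x \<in> ?A \<Longrightarrow> card {y \<in> ?B. E x y} = 2"
    using sum_mono_inv[OF out_eq card_successors_le_2 _ fin(1)] by blast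
  show "y \<in> ?B \<Longrightarrow> card {x \<in> ?A. E x y} = 1"
    using sum_mono_inv[OF in_eq pred_pos _ fin(2)] by simp
qed

lemma predecessor_unique:
  assumes "x \<in> layer k - S" "x' \<in> layer k - S" "y \<in> layer (Suc k)" "E x y" "E x' y"
  shows "x = x'"
proof -
  obtain w where w: "{x \<in> layer k - S. E x y} = {w}"
    using layer_edge_counts(2)[OF assms(3)] by (rule card_1_singletonE)
  have "x \<in> {w}" "x' \<in> {w}" unfolding w[symmetric] using assms by auto
  then show ?thesis by simp
qed

definition bfs_V :: "'a set" where
  "bfs_V = {x. reachable x}"

text \<open>In the tight case no vertex has two such edges from the previous layer
  (predecessor_unique), which makes this a tree.\<close>

definition bfs_E :: "'a \<Rightarrow> 'a \<Rightarrow> bool" where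
  "bfs_E x y \<longleftrightarrow> reachable x \<and> reachable y \<and> E x y
     \<and> (x \<notin> S \<and> lev y = Suc (lev x) \<or> y \<notin> S \<and> lev x = Suc (lev y))"

lemma bfs_E_sym: "bfs_E x y \<Longrightarrow> bfs_E y x"
  unfolding bfs_E_def using E_sym by blast

lemma bfs_E_lev: "bfs_E x y \<Longrightarrow> lev y \<le> Suc (lev x)"
  unfolding bfs_E_def by auto

lemma bfs_E_in_bfs_V: "bfs_E x y \<Longrightarrow> y \<in> bfs_V"
  unfolding bfs_E_def bfs_V_def by blast

lemma bfs_E_unique_below:
  assumes "bfs_E x y" "bfs_E x' y" "lev x \<le> lev y" "lev x' \<le> lev y"
  shows "x = x'"
proof -
  have "x \<in> layer (lev x) - S" "x' \<in> layer (lev x) - S" "y \<in> layer (Suc (lev x))" "E x y" "E x' y"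
    using assms unfolding bfs_E_def layer_def by auto
  then show ?thesis by (rule predecessor_unique)
qed

lemma bfs_walk_from_root:
  "reachable x \<Longrightarrow> \<exists>p. p \<noteq> [] \<and> successively bfs_E p \<and> hd p = u \<and> last p = x \<and> length p = Suc (lev x)"
proof (induction "lev x" arbitrary: x)
  case 0
  then show ?case using lev_eq_0_imp_root lev_root by (intro exI[of _ "[u]"]) auto
next
  case (Suc k)
  obtain z where z: "reachable z" "lev z = k" "z \<notin> S" "E z x"
    using parent_exists Suc by metis
  obtain p where p: "p \<noteq> []" "successively bfs_E p" "hd p = u" "last p = z" "length p = Suc k"
    using Suc.hyps(1)[of z] z by auto
  have "bfs_E z x" unfolding bfs_E_def using z Suc by auto
  then show ?case using p Suc.hyps(2)
    by (intro exI[of _ "p @ [x]"]) (auto simp: successively_append_iff)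
qed

lemma depth_bfs:
  assumes "reachable x"
  shows "depth bfs_V bfs_E u x = lev x"
  unfolding depth_def
proof (rule Least_equality)
  obtain p where p: "p \<noteq> []" "successively bfs_E p" "hd p = u" "last p = x" "length p = Suc (lev x)"
    using bfs_walk_from_root[OF assms] by blast
  obtain q where q: "q \<noteq> []" "successively bfs_E q" "distinct q" "hd q = u" "last q = x"
     "set q \<subseteq> set p" "length q \<le> length p"
    using successively_shorten_to_distinct[OF p(1,2)] p by auto
  have "lev x \<le> length q - 1"
    using successively_bounded_increase[where f=lev, OF bfs_E_lev q(2,1)] q lev_root by simp
  then have "length q = Suc (lev x)"
    using q(1,7) p(5) by (cases q) auto
  moreover have "set q \<subseteq> bfs_V"
    using successively_set_subset[OF bfs_E_in_bfs_V q(2,1)] q(4) reachable_root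
    unfolding bfs_V_def by simp
  ultimately show "\<exists>p. is_path bfs_V bfs_E p \<and> hd p = u \<and> last p = x \<and> length p = Suc (lev x)"
    using q unfolding is_path_iff_successively by blast
next
  fix n assume "\<exists>p. is_path bfs_V bfs_E p \<and> hd p = u \<and> last p = x \<and> length p = Suc n"
  then show "lev x \<le> n"
    using successively_bounded_increase[where f=lev, OF bfs_E_lev] lev_root unfolding is_path_iff_successively
    by fastforce
qed

lemma is_tree_bfs: "is_tree bfs_V bfs_E"
  unfolding is_tree_def
proof (intro conjI ballI)
  show "bfs_V \<noteq> {}" using reachable_root unfolding bfs_V_def by auto
next
  fix x y assume "x \<in> bfs_V" "y \<in> bfs_V"
  obtain p where p: "p \<noteq> []" "successively bfs_E p" "hd p = u" "last p = x"
    using bfs_walk_from_root \<open>x \<in> bfs_V\<close> unfolding bfs_V_def by blast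
  obtain q where q: "q \<noteq> []" "successively bfs_E q" "hd q = u" "last q = y"
    using bfs_walk_from_root \<open>y \<in> bfs_V\<close> unfolding bfs_V_def by blast
  let ?w = "rev p @ tl q"
  have w: "successively bfs_E ?w" "?w \<noteq> []" "hd ?w = x" "last ?w = y" "set ?w \<subseteq> set p \<union> set q"
    using successively_join_at_hd[OF p(2) q(2) bfs_E_sym p(1) q(1)] p q by auto
  have "set p \<union> set q \<subseteq> bfs_V"
    using successively_set_subset[OF bfs_E_in_bfs_V] p q reachable_root unfolding bfs_V_def by auto
  moreover obtain c where "c \<noteq> []" "successively bfs_E c" "distinct c" "hd c = x" "last c = y"
     "set c \<subseteq> set ?w"
    using successively_shorten_to_distinct[OF w(2,1)] w by auto
  ultimately show "\<exists>c. is_path bfs_V bfs_E c \<and> hd c = x \<and> last c = y"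
    using w(5) unfolding is_path_iff_successively by (intro exI[of _ c]) auto
next
  show "\<nexists>c. is_path bfs_V bfs_E c \<and> 3 \<le> length c \<and> bfs_E (last c) (hd c)"
  proof
    assume "\<exists>c. is_path bfs_V bfs_E c \<and> 3 \<le> length c \<and> bfs_E (last c) (hd c)"
    then obtain c where c: "distinct c" "3 \<le> length c" "successively bfs_E c" "bfs_E (last c) (hd c)"
      unfolding is_path_iff_successively by blast
    obtain a b m where "a \<noteq> b" "bfs_E a m" "bfs_E b m" "lev a \<le> lev m" "lev b \<le> lev m"
      using cycle_has_peak[where f=lev, OF bfs_E_sym c] by blast
    then show False using bfs_E_unique_below by blast
  qed
qed

lemma children_bfs:
  assumes "reachable x"
  shows "children bfs_V bfs_E u x = (if x \<in> S then {} else {y \<in> layer (Suc (lev x)). E x y})"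
  using assms depth_bfs unfolding children_def bfs_V_def bfs_E_def layer_def by auto

lemma card_children_bfs:
  assumes "reachable x" "x \<notin> S"
  shows "card (children bfs_V bfs_E u x) = 2"
proof -
  have "x \<in> layer (lev x) - S" using assms unfolding layer_def by simp
  then show ?thesis using children_bfs[OF assms(1)] layer_edge_counts(1) assms(2) by simp
qed

lemma leaves_bfs: "leaves bfs_V bfs_E u = S \<inter> bfs_V"
proof -
  have "children bfs_V bfs_E u x = {} \<longleftrightarrow> x \<in> S" if "reachable x" for x
    using children_bfs[OF that] card_children_bfs[OF that] by (cases "x \<in> S") (simp, metis card.empty zero_neq_numeral)
  then show ?thesis unfolding leaves_def bfs_V_def by auto
qed

lemma full_binary_bfs: "full_binary bfs_V bfs_E u"
  unfolding full_binary_def leaves_bfs using card_children_bfs unfolding bfs_V_def by auto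

lemma subgraph_bfs: "subgraph bfs_V bfs_E V E"
  unfolding subgraph_def bfs_V_def using reachable_in_V bfs_E_sym unfolding bfs_E_def by blast

end

lemma wGS_root_in_S:
  assumes "graph V E" "S \<subseteq> V" "u \<in> V" "u \<in> S"
  shows "wGS V E S u = 2"
proof -
  have "finite S" using assms(1,2) unfolding graph_def using finite_subset by blast
  have "S_path V E S u u [u]" unfolding S_path_def is_path_iff_successively using assms(3,4) by simp
  then have "distGS V E S u u = enat 0"
    unfolding distGS_def by (auto intro!: Least_equality)
  moreover have "distGS V E S u v = \<infinity>" if "v \<in> S" "v \<noteq> u" for v
    using that assms(4) unfolding distGS_def S_path_def by auto
  ultimately show ?thesis
    unfolding wGS_def using \<open>finite S\<close> assms(4) by (simp add: sum.remove powr_minus)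
qed

lemma singleton_full_binary_tree:
  "is_tree {u} (\<lambda>_ _. False) \<and> full_binary {u} (\<lambda>_ _. False) u \<and> leaves {u} (\<lambda>_ _. False) u = {u}"
proof -
  have "is_path {u} (\<lambda>_ _. False) [u]" by (simp add: is_path_iff_successively)
  moreover have "children {u} (\<lambda>_ _. False) u u = {}" unfolding children_def by simp
  ultimately show ?thesis unfolding is_tree_def full_binary_def leaves_def by auto
qed

theorem lemma1:
  fixes V :: "'a set" and E :: "'a \<Rightarrow> 'a \<Rightarrow> bool" and S :: "'a set" and u :: 'a
  assumes "graph V E"
    and "\<forall>x\<in>V. degree V E x \<le> 3"
    and "S \<subseteq> V"
    and "u \<in> V"
    and "degree V E u \<le> 2"
  shows "wGS V E S u \<le> 2 \<and>
    (wGS V E S u = 2 \<longleftrightarrow>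
      (\<exists>VT ET. subgraph VT ET V E \<and> is_tree VT ET \<and> u \<in> VT
         \<and> full_binary VT ET u \<and> S \<inter> VT = leaves VT ET u))"
proof (cases "u \<in> S")
  case True
  have "subgraph {u} (\<lambda>_ _. False) V E" using assms(4) unfolding subgraph_def by simp
  then have "\<exists>VT ET. subgraph VT ET V E \<and> is_tree VT ET \<and> u \<in> VT
      \<and> full_binary VT ET u \<and> S \<inter> VT = leaves VT ET u"
    using singleton_full_binary_tree[of u] True by (intro exI[of _ "{u}"] exI[of _ "\<lambda>_ _. False"]) auto
  then show ?thesis using wGS_root_in_S[OF assms(1,3,4) True] by simp
next
  case False
  interpret subcubic_avoiding_walks V E S u
    using assms False by unfold_locales auto
  have "\<exists>VT ET. subgraph VT ET V E \<and> is_tree VT ET \<and> u \<in> VT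
         \<and> full_binary VT ET u \<and> S \<inter> VT = leaves VT ET u" if "wGS V E S u = 2"
  proof -
    interpret tight_avoiding_walks V E S u
      by unfold_locales (rule card_layer_Suc_if_wGS_eq_2[OF that])
    show ?thesis using subgraph_bfs is_tree_bfs full_binary_bfs leaves_bfs reachable_root
      unfolding bfs_V_def by blast
  qed
  then show ?thesis using wGS_le_2 wGS_ge_2_if_full_binary_tree by fastforce
qed

end
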